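(* Fix integers $d\ge 1$ and $n\ge 1$. Then $$\sum_{\lambda\in\mathcal{H}_n} |\{i: 1\le i<\ell(\lambda),\ \lambda_i-\lambda_{i+1}<d\}| \;\ge\; \sum_{\lambda\in\mathcal{H}_n} |\{i: 1\le i\le \ell(\lambda),\ \lambda_i\not\equiv 1 \pmod{d+1}\}|.$$ That is, the total number of indices $i$ with $1\le i<\ell(\lambda)$ and $\lambda_i-\lambda_{i+1}<d$, over all $\lambda\in\mathcal{H}_n$, is at least the total number of parts not congruent to $1$ modulo $d+1$, over all $\lambda\in\mathcal{H}_n$.
   Context: A partition is a finite nonempty weakly decreasing sequence $\lambda=(\lambda_1,\ldots,\lambda_k)$ of positive integers; $\ell(\lambda)=k$ is its number of parts. The perimeter of $\lambda$ is $\Gamma(\lambda)=\lambda_1+\ell(\lambda)-1$, and $\mathcal{H}_n$ is the set of partitions with perimeter $n$. *)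

theory Defs
  imports Main
begin

text \<open>A partition is a finite nonempty weakly decreasing list of positive integers.
  Parts are lambda_1 = xs!0, ..., lambda_k = xs!(k-1).\<close>
definition is_partition :: "nat list \<Rightarrow> bool" where
  "is_partition xs \<longleftrightarrow> xs \<noteq> [] \<and> sorted_wrt (\<ge>) xs \<and> (\<forall>x\<in>set xs. x > 0)"

definition perimeter :: "nat list \<Rightarrow> nat" where
  "perimeter xs = hd xs + length xs - 1"

definition H :: "nat \<Rightarrow> nat list set" where
  "H n = {xs. is_partition xs \<and> perimeter xs = n}"

text \<open>Number of i with 1 <= i < l(lambda) and lambda_i - lambda_(i+1) < d (0-based here).\<close>
definition small_gaps :: "nat \<Rightarrow> nat list \<Rightarrow> nat" where
  "small_gaps d xs = card {i. i + 1 < length xs \<and> int (xs ! i) - int (xs ! (i+1)) < int d}"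

definition non_one_parts :: "nat \<Rightarrow> nat list \<Rightarrow> nat" where
  "non_one_parts d xs = card {i. i < length xs \<and> xs ! i mod (d + 1) \<noteq> 1 mod (d + 1)}"

end

theory Submission
  imports Defs
begin

text \<open>Removing the largest part of \<open>\<lambda> \<in> \<H>\<^sub>n\<close>, \<open>\<lambda> \<noteq> (n)\<close>, leaves a partition of some
  perimeter \<open>m < n\<close>, and this is a bijection onto \<open>\<Union>\<^sub>m<\<^sub>n \<H>\<^sub>m\<close>. The removed part creates a
  small gap exactly when \<open>n - m \<le> d\<close>, so, writing \<open>L\<^sub>n\<close> and \<open>R\<^sub>n\<close> for the two sides,
  \<open>L\<^sub>n = \<Sum>\<^bsub>n-d\<le>m<n\<^esub> |\<H>\<^sub>m| + \<Sum>\<^bsub>m<n\<^esub> L\<^sub>m\<close> and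
  \<open>R\<^sub>n = #{\<lambda> \<in> \<H>\<^sub>n. \<lambda>\<^sub>1 \<not>\<equiv> 1} + \<Sum>\<^bsub>m<n\<^esub> R\<^sub>m\<close>. By induction it suffices to compare the
  first terms. Since \<open>|\<H>\<^sub>n| = 1 + \<Sum>\<^bsub>m<n\<^esub> |\<H>\<^sub>m|\<close>, this amounts to
  \<open>#{\<lambda> \<in> \<H>\<^sub>n. \<lambda>\<^sub>1 \<equiv> 1} \<ge> |\<H>\<^bsub>n-d\<^esub>|\<close>, witnessed by the injection that adds to every part
  of \<open>\<mu> \<in> \<H>\<^bsub>n-d\<^esub>\<close> the least \<open>k\<close> making \<open>\<mu>\<^sub>1 + k \<equiv> 1 (mod d+1)\<close> and appends \<open>d - k\<close>
  parts equal to 1.\<close>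

lemma is_partition_Cons:
  "is_partition (a # ys) \<longleftrightarrow> a > 0 \<and> (\<forall>y\<in>set ys. y \<le> a) \<and> (ys = [] \<or> is_partition ys)"
  unfolding is_partition_def by auto

lemma Cons_in_H_iff: "a # ys \<in> H n \<longleftrightarrow> is_partition (a # ys) \<and> a + length ys = n"
  by (simp add: H_def perimeter_def)

lemma Nil_notin_H: "[] \<notin> H n"
  by (simp add: H_def is_partition_def)

lemma in_H_E:
  assumes "xs \<in> H n"
  obtains a ys where "xs = a # ys" "is_partition (a # ys)" "a + length ys = n"
  using assms by (cases xs) (auto simp: Nil_notin_H Cons_in_H_iff)

lemma finite_H: "finite (H n)"
proof (rule finite_subset)
  show "H n \<subseteq> {xs. set xs \<subseteq> {..n} \<and> length xs \<le> n}"
    by (fastforce elim!: in_H_E simp: is_partition_Cons)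
qed (rule finite_lists_length_le, simp)

lemma replicate_one_in_H: "n \<ge> 1 \<Longrightarrow> replicate n 1 \<in> H n"
  by (auto simp: H_def is_partition_def perimeter_def sorted_wrt_iff_nth_less)

definition prepend_largest :: "nat \<Rightarrow> nat list \<Rightarrow> nat list" where
  "prepend_largest n ys = (n - length ys) # ys"

lemma H_eq_insert_prepend_largest:
  assumes "n \<ge> 1"
  shows "H n = insert [n] (prepend_largest n ` (\<Union>m\<in>{1..<n}. H m))"
proof (intro equalityI subsetI)
  fix xs assume "xs \<in> H n"
  then obtain a ys where xs: "xs = a # ys" "is_partition (a # ys)" "a + length ys = n"
    by (rule in_H_E)
  show "xs \<in> insert [n] (prepend_largest n ` (\<Union>m\<in>{1..<n}. H m))"
  proof (cases ys)
    case Nil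
    then show ?thesis using xs by simp
  next
    case (Cons b zs)
    with xs have "ys \<in> H (b + length zs)" "b + length zs \<in> {1..<n}" "xs = prepend_largest n ys"
      by (auto simp: Cons_in_H_iff is_partition_Cons prepend_largest_def)
    then show ?thesis by blast
  qed
next
  fix xs assume xs: "xs \<in> insert [n] (prepend_largest n ` (\<Union>m\<in>{1..<n}. H m))"
  show "xs \<in> H n"
  proof (cases "xs = [n]")
    case True
    then show ?thesis using assms by (simp add: Cons_in_H_iff is_partition_Cons)
  next
    case False
    then obtain m ys where "m \<in> {1..<n}" "ys \<in> H m" "xs = prepend_largest n ys"
      using xs by auto
    then show ?thesis
      by (fastforce elim!: in_H_E simp: prepend_largest_def Cons_in_H_iff is_partition_Cons)
  qed
qed

lemma H_disjoint: "m \<noteq> n \<Longrightarrow> H m \<inter> H n = {}"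
  by (auto simp: H_def)

lemma sum_H_rec:
  assumes "n \<ge> 1"
  shows "sum f (H n) = f [n] + (\<Sum>m\<in>{1..<n}. \<Sum>ys\<in>H m. f (prepend_largest n ys))"
proof -
  have inj: "inj (prepend_largest n)"
    by (rule injI) (simp add: prepend_largest_def)
  have "[n] \<notin> prepend_largest n ` (\<Union>m\<in>{1..<n}. H m)"
    by (auto simp: prepend_largest_def Nil_notin_H)
  then have "sum f (H n) = f [n] + sum f (prepend_largest n ` (\<Union>m\<in>{1..<n}. H m))"
    by (simp add: H_eq_insert_prepend_largest[OF assms] finite_H)
  also have "\<dots> = f [n] + (\<Sum>ys\<in>(\<Union>m\<in>{1..<n}. H m). f (prepend_largest n ys))"
    by (simp add: sum.reindex[OF inj_on_subset[OF inj]])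
  also have "\<dots> = f [n] + (\<Sum>m\<in>{1..<n}. \<Sum>ys\<in>H m. f (prepend_largest n ys))"
    by (subst sum.UNION_disjoint) (auto simp: finite_H H_disjoint)
  finally show ?thesis .
qed

lemma card_H_rec: "n \<ge> 1 \<Longrightarrow> card (H n) = 1 + (\<Sum>m\<in>{1..<n}. card (H m))"
  using sum_H_rec[of n "\<lambda>_. 1::nat"] by simp

lemma card_less_Suc_filter:
  "card {i. i < Suc k \<and> P i} = of_bool (P 0) + card {i. i < k \<and> P (Suc i)}"
proof -
  have "{i. i < Suc k \<and> P i} = (if P 0 then {0} else {}) \<union> Suc ` {i. i < k \<and> P (Suc i)}"
    by (auto simp: less_Suc_eq_0_disj)
  then show ?thesis
    by (simp add: card_Un_disjoint card_image)
qed

lemma small_gaps_Cons: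
  "small_gaps d (a # ys) =
     of_bool (ys \<noteq> [] \<and> int a - int (hd ys) < int d) + small_gaps d ys"
proof -
  have "small_gaps d (a # ys) = card {i. i < Suc (length ys) \<and>
          i < length ys \<and> int ((a # ys) ! i) - int ((a # ys) ! Suc i) < int d}"
    unfolding small_gaps_def by (auto intro: arg_cong[where f = card])
  then show ?thesis
    unfolding card_less_Suc_filter small_gaps_def
    by (cases ys) (auto intro!: arg_cong[where f = card])
qed

lemma non_one_parts_Cons:
  "non_one_parts d (a # ys) =
     of_bool (a mod (d + 1) \<noteq> 1 mod (d + 1)) + non_one_parts d ys"
  unfolding non_one_parts_def by (simp add: card_less_Suc_filter)

lemma small_gaps_prepend_largest:
  assumes "ys \<in> H m" and "m < n"
  shows "small_gaps d (prepend_largest n ys) = of_bool (n \<le> m + d) + small_gaps d ys"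
  using assms by (auto elim!: in_H_E simp: prepend_largest_def small_gaps_Cons)

lemma sum_small_gaps_H_rec:
  assumes "n \<ge> 1"
  shows "(\<Sum>xs\<in>H n. small_gaps d xs) =
           (\<Sum>m\<in>{1..<n}. if n \<le> m + d then card (H m) else 0)
         + (\<Sum>m\<in>{1..<n}. \<Sum>xs\<in>H m. small_gaps d xs)"
proof -
  have "(\<Sum>ys\<in>H m. small_gaps d (prepend_largest n ys)) =
          (if n \<le> m + d then card (H m) else 0) + (\<Sum>ys\<in>H m. small_gaps d ys)"
    if "m < n" for m
    using that by (simp add: small_gaps_prepend_largest sum.distrib)
  then show ?thesis
    by (simp add: sum_H_rec[OF assms] small_gaps_def sum.distrib)
qed

lemma sum_non_one_parts_H_rec:
  assumes "n \<ge> 1"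
  shows "(\<Sum>xs\<in>H n. non_one_parts d xs) =
           card {xs \<in> H n. hd xs mod (d + 1) \<noteq> 1 mod (d + 1)}
         + (\<Sum>m\<in>{1..<n}. \<Sum>xs\<in>H m. non_one_parts d xs)"
proof -
  have "(\<Sum>xs\<in>H n. non_one_parts d xs) =
          (\<Sum>xs\<in>H n. of_bool (hd xs mod (d + 1) \<noteq> 1 mod (d + 1)) + non_one_parts d (tl xs))"
    by (intro sum.cong refl) (auto elim!: in_H_E simp: non_one_parts_Cons)
  moreover have "(\<Sum>xs\<in>H n. non_one_parts d (tl xs)) =
                   (\<Sum>m\<in>{1..<n}. \<Sum>xs\<in>H m. non_one_parts d xs)"
    by (simp add: sum_H_rec[OF assms] non_one_parts_def prepend_largest_def)
  ultimately show ?thesis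
    by (simp add: sum.distrib finite_H Int_def)
qed

definition offset_to_one :: "nat \<Rightarrow> nat \<Rightarrow> nat" where
  "offset_to_one d b = (d + 2 - b mod (d + 1)) mod (d + 1)"

lemma offset_to_one_le: "offset_to_one d b \<le> d"
  using mod_less_divisor[of "d + 1" "d + 2 - b mod (d + 1)"]
  unfolding offset_to_one_def by linarith

lemma add_offset_to_one_mod: "(b + offset_to_one d b) mod (d + 1) = 1 mod (d + 1)"
proof -
  have "(b + offset_to_one d b) mod (d + 1) = (b mod (d + 1) + (d + 2 - b mod (d + 1))) mod (d + 1)"
    unfolding offset_to_one_def by (simp add: mod_add_left_eq mod_add_right_eq)
  also have "b mod (d + 1) + (d + 2 - b mod (d + 1)) = 1 + (d + 1)"
    using mod_less_divisor[of "d + 1" b] by linarith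
  also have "(1 + (d + 1)) mod (d + 1) = 1 mod (d + 1)"
    by (rule mod_add_self2)
  finally show ?thesis .
qed

lemma is_partition_map_add_append_ones:
  assumes "is_partition ys"
  shows "is_partition (map (\<lambda>x. x + k) ys @ replicate r 1)"
proof -
  have "sorted_wrt (\<ge>) (replicate r (1::nat))"
    by (induction r) auto
  then show ?thesis
    using assms by (auto simp: is_partition_def sorted_wrt_append sorted_wrt_map Suc_leI)
qed

definition raise_perimeter :: "nat \<Rightarrow> nat list \<Rightarrow> nat list" where
  "raise_perimeter d ys =
     (let k = offset_to_one d (hd ys) in map (\<lambda>x. x + k) ys @ replicate (d - k) 1)"

lemma raise_perimeter_in_H:
  assumes "ys \<in> H m"
  shows "raise_perimeter d ys \<in> {xs \<in> H (m + d). hd xs mod (d + 1) = 1 mod (d + 1)}"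
proof -
  from assms obtain b zs where ys: "ys = b # zs" "is_partition (b # zs)" "b + length zs = m"
    by (rule in_H_E)
  define k where "k = offset_to_one d b"
  have "k \<le> d"
    unfolding k_def by (rule offset_to_one_le)
  moreover have "raise_perimeter d ys = (b + k) # map (\<lambda>x. x + k) zs @ replicate (d - k) 1"
    by (simp add: raise_perimeter_def Let_def ys k_def)
  moreover have "is_partition ((b + k) # map (\<lambda>x. x + k) zs @ replicate (d - k) 1)"
    using is_partition_map_add_append_ones[OF ys(2), of k "d - k"] by simp
  ultimately show ?thesis
    using ys add_offset_to_one_mod[of b d] by (simp add: Cons_in_H_iff k_def)
qed

lemma map_add_append_ones_eq_imp_le:
  assumes eq: "map (\<lambda>x. x + k) xs @ replicate r 1 = map (\<lambda>x. x + k') ys @ replicate r' (1::nat)"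
    and "k + r = k' + r'" and "\<forall>y\<in>set ys. y > 0"
  shows "k' \<le> k"
proof (rule ccontr)
  assume "\<not> k' \<le> k"
  \<comment> \<open>At the last index of \<open>ys\<close> the right side holds a part raised by \<open>k' > 0\<close>, the left an appended 1.\<close>
  have "length xs + r = length ys + r'"
    using arg_cong[OF eq, of length] by simp
  with \<open>k + r = k' + r'\<close> \<open>\<not> k' \<le> k\<close> obtain j
    where j: "j = length ys - 1" "length xs \<le> j" "j < length xs + r" "j < length ys"
    by fastforce
  then have "(map (\<lambda>x. x + k) xs @ replicate r 1) ! j = 1"
    by (simp add: nth_append)
  moreover have "(map (\<lambda>x. x + k') ys @ replicate r' 1) ! j = ys ! j + k'"
    using j by (simp add: nth_append)
  moreover have "ys ! j > 0"
    using assms(3) j nth_mem by blast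
  ultimately show False
    using eq \<open>\<not> k' \<le> k\<close> by simp
qed

lemma inj_on_raise_perimeter: "inj_on (raise_perimeter d) {ys. \<forall>y\<in>set ys. y > 0}"
proof (rule inj_onI)
  fix xs ys assume pos: "xs \<in> {ys. \<forall>y\<in>set ys. y > 0}" "ys \<in> {ys. \<forall>y\<in>set ys. y > 0}"
    and eq: "raise_perimeter d xs = raise_perimeter d ys"
  define k k' where "k = offset_to_one d (hd xs)" and "k' = offset_to_one d (hd ys)"
  have eq': "map (\<lambda>x. x + k) xs @ replicate (d - k) 1 = map (\<lambda>x. x + k') ys @ replicate (d - k') 1"
    using eq by (simp add: raise_perimeter_def Let_def k_def k'_def)
  have "k + (d - k) = k' + (d - k')"
    using offset_to_one_le by (simp add: k_def k'_def)
  with eq' pos have "k = k'"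
    using map_add_append_ones_eq_imp_le by (metis le_antisym mem_Collect_eq)
  with eq' show "xs = ys"
    by (simp add: inj_map_eq_map inj_def)
qed

lemma card_head_one_ge:
  assumes "n \<ge> 1"
  shows "1 + (\<Sum>m\<in>{1..<n}. if m + d < n then card (H m) else 0)
           \<le> card {xs \<in> H n. hd xs mod (d + 1) = 1 mod (d + 1)}"
proof (cases "n \<le> d")
  case True
  then have "(\<Sum>m\<in>{1..<n}. if m + d < n then card (H m) else 0) = 0"
    by simp
  moreover have "card {xs \<in> H n. hd xs mod (d + 1) = 1 mod (d + 1)} > 0"
    using replicate_one_in_H[OF assms] assms finite_H[of n] by (auto simp: card_gt_0_iff)
  ultimately show ?thesis
    by simp
next
  case False
  have "(\<Sum>m\<in>{1..<n}. if m + d < n then card (H m) else 0) = (\<Sum>m\<in>{1..<n - d}. card (H m))"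
    using False by (intro sum.mono_neutral_cong_right) auto
  also have "1 + \<dots> = card (H (n - d))"
    using False card_H_rec[of "n - d"] by simp
  also have "\<dots> = card (raise_perimeter d ` H (n - d))"
    by (rule card_image[symmetric], rule inj_on_subset[OF inj_on_raise_perimeter])
      (auto simp: H_def is_partition_def)
  also have "\<dots> \<le> card {xs \<in> H n. hd xs mod (d + 1) = 1 mod (d + 1)}"
    using False raise_perimeter_in_H[of _ "n - d" d] by (intro card_mono) (auto simp: finite_H)
  finally show ?thesis .
qed

lemma card_head_not_one_le:
  assumes "n \<ge> 1"
  shows "card {xs \<in> H n. hd xs mod (d + 1) \<noteq> 1 mod (d + 1)}
           \<le> (\<Sum>m\<in>{1..<n}. if n \<le> m + d then card (H m) else 0)"
proof -
  have "card (H n) = card {xs \<in> H n. hd xs mod (d + 1) = 1 mod (d + 1)}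
                   + card {xs \<in> H n. hd xs mod (d + 1) \<noteq> 1 mod (d + 1)}"
    by (subst card_Un_disjoint[symmetric]) (auto simp: finite_H intro: arg_cong[where f = card])
  moreover have "card (H n) = 1 + (\<Sum>m\<in>{1..<n}. if n \<le> m + d then card (H m) else 0)
                               + (\<Sum>m\<in>{1..<n}. if m + d < n then card (H m) else 0)"
    by (auto simp: card_H_rec[OF assms] sum.distrib[symmetric] intro!: sum.cong)
  ultimately show ?thesis
    using card_head_one_ge[OF assms, of d] by linarith
qed

theorem theorem1p4:
  fixes d n :: nat
  assumes "d \<ge> 1" and "n \<ge> 1"
  shows "(\<Sum>xs\<in>H n. small_gaps d xs) \<ge> (\<Sum>xs\<in>H n. non_one_parts d xs)"
  using assms(2)
proof (induction n rule: less_induct)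
  case (less n)
  have "(\<Sum>m\<in>{1..<n}. \<Sum>xs\<in>H m. non_one_parts d xs) \<le> (\<Sum>m\<in>{1..<n}. \<Sum>xs\<in>H m. small_gaps d xs)"
    by (rule sum_mono) (use less.IH in auto)
  with card_head_not_one_le[OF less.prems, of d] show ?case
    by (simp add: sum_small_gaps_H_rec[OF less.prems] sum_non_one_parts_H_rec[OF less.prems])
qed

end
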